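(* Let $T$ be a node-weighted MFQST with Steiner point cost $c>0$ on sources $z_1,\dots,z_n$ and sink $z_{BS}$, and suppose $T$ contains exactly $k$ Steiner points. Then $$k\le\frac1c\left(L_c(BST(Z))-\frac{1}{n+k+1}\sum_{i=1}^n|z_iz_{BS}|^2\right).$$
   Context: Let $Z=\{z_1,\dots,z_n\}\subset\mathbb{R}^2$ ($n\ge 1$) be a set of sources and $z_{BS}\in\mathbb{R}^2\setminus Z$ a sink; each source has supply $1$. A flow-dependent quadratic Steiner tree (FQST) consists of a finite set $S\subset\mathbb{R}^2$ of Steiner points and a tree $T$ with vertex set $Z\cup S\cup\{z_{BS}\}$ whose edges are directed towards $z_{BS}$. Every node other than the sink has exactly one out-edge, and the sink has none. Each edge $e$ carries a positive flow $f(e)$ such that: - at each source, the flow on its out-edge minus the total flow on its in-edges equals $1$; - at each Steiner point, the out-flow equals the total in-flow; - the sink receives total flow $n$. The cost is $L(T)=\sum_{e\in E(T)} f(e)|e|^2$. A node-weighted MFQST minimises $L_c(T)=L(T)+c|S|$ over all FQSTs. Beaded spanning tree $BST(Z)$: take a Euclidean minimum spanning tree on $Z\cup\{z_{BS}\}$, directed towards $z_{BS}$, with flows determined as for an FQST. On each edge $e$ with flow $f(e)$, insert the minimum number of equally spaced degree-two Steiner points along the segment so that every resulting edge has length at most $\sqrt{2c/f(e)}$. The resulting FQST is $BST(Z)$. *)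

theory Defs
  imports "HOL-Analysis.Analysis"
begin

type_synonym pt = "real^2"

text \<open>An FQST on sources Z and sink s: Steiner point set S, a parent map nxt
(the unique out-edge of each non-sink node v is (v, nxt v)), and a flow f
(f v is the flow on the out-edge of v).\<close>
definition is_fqst :: "pt set \<Rightarrow> pt \<Rightarrow> pt set \<Rightarrow> (pt \<Rightarrow> pt) \<Rightarrow> (pt \<Rightarrow> real) \<Rightarrow> bool" where
  "is_fqst Z s S nxt f \<longleftrightarrow>
     finite S \<and> S \<inter> (Z \<union> {s}) = {} \<and>
     (\<forall>v \<in> Z \<union> S. nxt v \<in> Z \<union> S \<union> {s}) \<and>
     (\<forall>v \<in> Z \<union> S. \<exists>j. (nxt ^^ j) v = s) \<and>
     (\<forall>v \<in> Z \<union> S. f v > 0) \<and>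
     (\<forall>v \<in> Z. f v - (\<Sum>u \<in> {u \<in> Z \<union> S. nxt u = v}. f u) = 1) \<and>
     (\<forall>v \<in> S. f v = (\<Sum>u \<in> {u \<in> Z \<union> S. nxt u = v}. f u)) \<and>
     (\<Sum>u \<in> {u \<in> Z \<union> S. nxt u = s}. f u) = real (card Z)"

definition fqst_cost :: "pt set \<Rightarrow> pt set \<Rightarrow> (pt \<Rightarrow> pt) \<Rightarrow> (pt \<Rightarrow> real) \<Rightarrow> real" where
  "fqst_cost Z S nxt f = (\<Sum>v \<in> Z \<union> S. f v * (dist v (nxt v))\<^sup>2)"

definition fqst_costc :: "real \<Rightarrow> pt set \<Rightarrow> pt set \<Rightarrow> (pt \<Rightarrow> pt) \<Rightarrow> (pt \<Rightarrow> real) \<Rightarrow> real" where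
  "fqst_costc c Z S nxt f = fqst_cost Z S nxt f + c * real (card S)"

definition is_mfqst :: "real \<Rightarrow> pt set \<Rightarrow> pt \<Rightarrow> pt set \<Rightarrow> (pt \<Rightarrow> pt) \<Rightarrow> (pt \<Rightarrow> real) \<Rightarrow> bool" where
  "is_mfqst c Z s S nxt f \<longleftrightarrow> is_fqst Z s S nxt f \<and>
     (\<forall>S' nxt' f'. is_fqst Z s S' nxt' f' \<longrightarrow> fqst_costc c Z S nxt f \<le> fqst_costc c Z S' nxt' f')"

definition is_sptree :: "pt set \<Rightarrow> pt \<Rightarrow> (pt \<Rightarrow> pt) \<Rightarrow> bool" where
  "is_sptree Z s nxt \<longleftrightarrow> (\<forall>v \<in> Z. nxt v \<in> Z \<union> {s}) \<and> (\<forall>v \<in> Z. \<exists>j. (nxt ^^ j) v = s)"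

definition tree_length :: "pt set \<Rightarrow> (pt \<Rightarrow> pt) \<Rightarrow> real" where
  "tree_length Z nxt = (\<Sum>v \<in> Z. dist v (nxt v))"

definition is_emst :: "pt set \<Rightarrow> pt \<Rightarrow> (pt \<Rightarrow> pt) \<Rightarrow> bool" where
  "is_emst Z s nxt \<longleftrightarrow> is_sptree Z s nxt \<and>
     (\<forall>nxt'. is_sptree Z s nxt' \<longrightarrow> tree_length Z nxt \<le> tree_length Z nxt')"

definition num_beads :: "real \<Rightarrow> real \<Rightarrow> real \<Rightarrow> nat" where
  "num_beads c fl len = (LEAST m::nat. len / real (m + 1) \<le> sqrt (2 * c / fl))"

text \<open>L_c(BST(Z)) for the EMST nxt with flows f: each MST edge (v, nxt v) is
subdivided into m+1 sub-edges of length |e|/(m+1), each carrying flow f v, and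
contributes m Steiner points.\<close>
definition bst_costc :: "real \<Rightarrow> pt set \<Rightarrow> (pt \<Rightarrow> pt) \<Rightarrow> (pt \<Rightarrow> real) \<Rightarrow> real" where
  "bst_costc c Z nxt f =
     (\<Sum>v \<in> Z. let m = num_beads c (f v) (dist v (nxt v)) in
        real (m + 1) * (f v * (dist v (nxt v) / real (m + 1))\<^sup>2) + c * real m)"

end

theory Submission
  imports Defs
begin

text \<open>
  Let \<open>T\<close> be a minimum node-weighted FQST with \<open>k\<close> Steiner points and write
  \<open>D = \<Sum>\<^sub>i |z\<^sub>i z\<^sub>B\<^sub>S|\<^sup>2\<close>.  The theorem follows by comparing two bounds on \<open>L(T)\<close>.

  Lower bound (\<open>fqst_cost_lower_bound\<close>): flow conservation forces the flow on each edge
  to equal the number of sources upstream of it, so \<open>L(T)\<close> is the sum over the sources of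
  the squared edge lengths along their paths to the sink.  Each path has at most
  \<open>n + k\<close> edges, so the triangle inequality and Cauchy--Schwarz give \<open>D \<le> (n + k) L(T)\<close>.

  Upper bound (\<open>mfqst_costc_le_bst\<close>): inserting beads into the spanning-tree edges one
  at a time yields FQSTs whose node-weighted cost is arbitrarily close to \<open>L\<^sub>c(BST(Z))\<close>
  (beads are perturbed slightly so as not to collide with existing nodes); minimality
  of \<open>T\<close> then gives \<open>L(T) + c k \<le> L\<^sub>c(BST(Z))\<close>.

  Combining, \<open>c k \<le> L\<^sub>c(BST(Z)) - D/(n+k) \<le> L\<^sub>c(BST(Z)) - D/(n+k+1)\<close>.
\<close>

subsection \<open>Following a parent map\<close>

definition depth :: "('a \<Rightarrow> 'a) \<Rightarrow> 'a \<Rightarrow> 'a \<Rightarrow> nat" where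
  "depth nxt s u = (LEAST j. (nxt ^^ j) u = s)"

lemma funpow_fixpoint: "nxt s = s \<Longrightarrow> (nxt ^^ i) s = s"
  by (induction i) auto

lemma iterate_at_root_iff:
  assumes root: "nxt s = s" and reach: "\<exists>j. (nxt ^^ j) u = s"
  shows "(nxt ^^ i) u = s \<longleftrightarrow> depth nxt s u \<le> i"
proof
  assume "(nxt ^^ i) u = s"
  then show "depth nxt s u \<le> i" unfolding depth_def by (rule Least_le)
next
  assume le: "depth nxt s u \<le> i"
  have at_depth: "(nxt ^^ depth nxt s u) u = s"
    unfolding depth_def using reach by (rule LeastI_ex)
  have "(nxt ^^ i) u = (nxt ^^ (i - depth nxt s u)) ((nxt ^^ depth nxt s u) u)"
    using le by (metis funpow_add comp_apply le_add_diff_inverse2)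
  also have "\<dots> = s" using at_depth funpow_fixpoint[of nxt s, OF root] by simp
  finally show "(nxt ^^ i) u = s" .
qed

lemma depth_iterate:
  assumes root: "nxt s = s" and reach: "\<exists>j. (nxt ^^ j) u = s"
  shows "depth nxt s ((nxt ^^ i) u) = depth nxt s u - i"
proof -
  have "(nxt ^^ k) ((nxt ^^ i) u) = s \<longleftrightarrow> depth nxt s u - i \<le> k" for k
    using iterate_at_root_iff[OF root reach, of "k + i"] by (auto simp: funpow_add)
  then show ?thesis unfolding depth_def[of nxt s "(nxt ^^ i) u"] by (intro Least_equality) auto
qed

lemma dist_iterate_le:
  fixes g :: "'a::metric_space \<Rightarrow> 'a"
  shows "dist x ((g ^^ n) x) \<le> (\<Sum>j<n. dist ((g ^^ j) x) (g ((g ^^ j) x)))"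
proof (induction n)
  case (Suc n)
  have "dist x ((g ^^ Suc n) x) \<le> dist x ((g ^^ n) x) + dist ((g ^^ n) x) (g ((g ^^ n) x))"
    by (simp add: dist_triangle)
  with Suc show ?case by simp
qed simp

lemma reach_transfer:
  fixes nxt nxt' :: "'a \<Rightarrow> 'a"
  assumes closed: "\<And>u. u \<in> V \<Longrightarrow> nxt u \<in> V \<union> {s}"
    and step: "\<And>u. u \<in> V \<Longrightarrow> \<exists>j. (nxt' ^^ j) (nxt u) = s \<Longrightarrow> \<exists>j. (nxt' ^^ j) u = s"
  shows "u \<in> V \<union> {s} \<Longrightarrow> (nxt ^^ j) u = s \<Longrightarrow> \<exists>j. (nxt' ^^ j) u = s"
proof (induction j arbitrary: u)
  case 0
  then show ?case by (auto intro: exI[of _ 0])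
next
  case (Suc j)
  show ?case
  proof (cases "u = s")
    case True
    then show ?thesis by (auto intro: exI[of _ 0])
  next
    case False
    with Suc.prems have u: "u \<in> V" by simp
    have "(nxt ^^ j) (nxt u) = s" using Suc.prems(2) by (simp add: funpow_Suc_right del: funpow.simps)
    with Suc.IH closed[OF u] have "\<exists>j. (nxt' ^^ j) (nxt u) = s" by blast
    with step[OF u] show ?thesis by blast
  qed
qed

lemma reaches_from_parent:
  assumes "(nxt ^^ j) v = s" "v \<noteq> s"
  shows "\<exists>i. (nxt ^^ i) (nxt v) = s"
  using assms by (cases j) (auto simp: funpow_Suc_right simp del: funpow.simps)

subsection \<open>Flows count the upstream sources\<close>

text \<open>An FQST whose sink is a fixed point of the parent map; every FQST can be brought
  into this form without changing its cost (\<open>fqst_sink_loop\<close> below).\<close>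
locale rooted_fqst =
  fixes Z :: "pt set" and s :: pt and S :: "pt set" and nxt :: "pt \<Rightarrow> pt" and f :: "pt \<Rightarrow> real"
  assumes fqst: "is_fqst Z s S nxt f"
    and root_loop: "nxt s = s"
    and finite_sources: "finite Z"
    and sink_not_source: "s \<notin> Z"
begin

abbreviation V :: "pt set" where "V \<equiv> Z \<union> S"

abbreviation dep :: "pt \<Rightarrow> nat" where "dep \<equiv> depth nxt s"

definition upstream :: "pt \<Rightarrow> pt set" where
  "upstream v = {z \<in> Z. \<exists>j. (nxt ^^ j) z = v}"

definition children :: "pt \<Rightarrow> pt set" where
  "children v = {u \<in> V. nxt u = v}"

lemma finite_V: "finite V"
  using fqst finite_sources unfolding is_fqst_def by auto

lemma sink_notin_V: "s \<notin> V"
  using fqst sink_not_source unfolding is_fqst_def by auto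

lemma reaches_sink: "u \<in> V \<Longrightarrow> \<exists>j. (nxt ^^ j) u = s"
  using fqst unfolding is_fqst_def by auto

lemma flow_balance:
  "v \<in> V \<Longrightarrow> f v = (if v \<in> Z then 1 else 0) + (\<Sum>u\<in>children v. f u)"
  using fqst unfolding is_fqst_def children_def by (auto simp: algebra_simps)

lemma iterate_closed: "u \<in> V \<union> {s} \<Longrightarrow> (nxt ^^ i) u \<in> V \<union> {s}"
proof (induction i)
  case (Suc i)
  then show ?case using fqst root_loop unfolding is_fqst_def by auto
qed simp

lemma iterate_in_V_iff: "u \<in> V \<Longrightarrow> (nxt ^^ j) u \<in> V \<longleftrightarrow> j < dep u"
  using iterate_closed[of u j] iterate_at_root_iff[OF root_loop reaches_sink, of u j] sink_notin_V
  by (cases "(nxt ^^ j) u = s") auto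

lemma depth_iterate_V: "u \<in> V \<Longrightarrow> dep ((nxt ^^ i) u) = dep u - i"
  by (rule depth_iterate[OF root_loop reaches_sink])

lemma depth_child: "u \<in> children v \<Longrightarrow> dep u = dep v + 1"
proof -
  assume "u \<in> children v"
  then have u: "u \<in> V" "nxt u = v" unfolding children_def by auto
  have "0 < dep u" using iterate_in_V_iff[OF u(1), of 0] u(1) by simp
  with depth_iterate_V[OF u(1), of 1] u(2) show ?thesis by simp
qed

text \<open>Upstream sets obey the same recursion as the flow: a source upstream of \<open>v\<close> is
  \<open>v\<close> itself or lies upstream of one of its children.\<close>
lemma upstream_split:
  assumes v: "v \<in> V"
  shows "upstream v = (Z \<inter> {v}) \<union> (\<Union>u\<in>children v. upstream u)"
proof (intro equalityI subsetI)
  fix z assume "z \<in> upstream v"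
  then obtain j where z: "z \<in> Z" and j: "(nxt ^^ j) z = v" unfolding upstream_def by auto
  show "z \<in> (Z \<inter> {v}) \<union> (\<Union>u\<in>children v. upstream u)"
  proof (cases j)
    case 0 with z j show ?thesis by simp
  next
    case (Suc i)
    have "Suc i < dep z" using iterate_in_V_iff[of z j] j v z Suc by simp
    then have "(nxt ^^ i) z \<in> V" using iterate_in_V_iff[of z i] z by simp
    then have "(nxt ^^ i) z \<in> children v" using j Suc unfolding children_def by simp
    moreover have "z \<in> upstream ((nxt ^^ i) z)" unfolding upstream_def using z by auto
    ultimately show ?thesis by blast
  qed
next
  fix z assume "z \<in> (Z \<inter> {v}) \<union> (\<Union>u\<in>children v. upstream u)"
  then show "z \<in> upstream v"
  proof
    assume "z \<in> Z \<inter> {v}" then show ?thesis unfolding upstream_def by (auto intro: exI[of _ 0])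
  next
    assume "z \<in> (\<Union>u\<in>children v. upstream u)"
    then obtain u j where "u \<in> children v" "z \<in> Z" "(nxt ^^ j) z = u" unfolding upstream_def by auto
    then have "z \<in> Z" "(nxt ^^ Suc j) z = v" unfolding children_def by auto
    then show ?thesis unfolding upstream_def by blast
  qed
qed

text \<open>Distinct children have disjoint upstream sets: depth determines how many steps a
  source needs to reach a node, and the walk is deterministic.\<close>
lemma upstream_children_disjoint:
  assumes "u \<in> children v" "u' \<in> children v" "u \<noteq> u'"
  shows "upstream u \<inter> upstream u' = {}"
proof (rule ccontr)
  assume "upstream u \<inter> upstream u' \<noteq> {}"
  then obtain z j j' where z: "z \<in> Z" and j: "(nxt ^^ j) z = u" and j': "(nxt ^^ j') z = u'"
    unfolding upstream_def by auto
  have V: "u \<in> V" "u' \<in> V" "z \<in> V" using assms(1,2) z unfolding children_def by auto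
  have "j < dep z" "j' < dep z" using iterate_in_V_iff[OF V(3), of j] iterate_in_V_iff[OF V(3), of j'] j j' V
    by simp_all
  moreover have "dep u = dep z - j" "dep u' = dep z - j'" using depth_iterate_V[OF V(3)] j j' by auto
  moreover have "dep u = dep u'" using depth_child assms(1,2) by simp
  ultimately have "j = j'" by linarith
  with j j' assms(3) show False by simp
qed

text \<open>A node never lies upstream of its own child (the child is deeper).\<close>
lemma source_not_upstream_of_child:
  assumes "v \<in> V" "u \<in> children v"
  shows "(Z \<inter> {v}) \<inter> upstream u = {}"
proof (rule ccontr)
  assume "(Z \<inter> {v}) \<inter> upstream u \<noteq> {}"
  then obtain j where "(nxt ^^ j) v = u" unfolding upstream_def by auto
  then have "dep u = dep v - j" using depth_iterate_V[OF assms(1)] by blast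
  with depth_child[OF assms(2)] show False by linarith
qed

lemma card_upstream:
  assumes "v \<in> V"
  shows "card (upstream v) = card (Z \<inter> {v}) + (\<Sum>u\<in>children v. card (upstream u))"
proof -
  have fin: "finite (children v)" "finite (upstream u)" for u
    using finite_V finite_sources unfolding children_def upstream_def by auto
  have "card (upstream v) = card (Z \<inter> {v}) + card (\<Union>u\<in>children v. upstream u)"
    unfolding upstream_split[OF assms]
    by (rule card_Un_disjoint) (use fin source_not_upstream_of_child[OF assms] in auto)
  also have "card (\<Union>u\<in>children v. upstream u) = (\<Sum>u\<in>children v. card (upstream u))"
    by (rule card_UN_disjoint) (use fin upstream_children_disjoint in auto)
  finally show ?thesis .
qed

text \<open>Flow conservation forces the flow on every edge to be the number of sources
  upstream of it (induction from the leaves, i.e.\ downward in depth).\<close>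
lemma flow_eq_card_upstream:
  assumes "v \<in> V"
  shows "f v = card (upstream v)"
proof -
  define M where "M = Max (dep ` V)"
  have "\<forall>v\<in>V. M - dep v = n \<longrightarrow> f v = card (upstream v)" for n
  proof (induction n rule: less_induct)
    case (less n)
    show ?case
    proof (intro ballI impI)
      fix v assume v: "v \<in> V" and n: "M - dep v = n"
      have "f u = card (upstream u)" if u: "u \<in> children v" for u
      proof -
        have "u \<in> V" using u unfolding children_def by auto
        then have "dep u \<le> M" unfolding M_def using finite_V by simp
        then have "M - dep u < n" using n depth_child[OF u] by linarith
        then show ?thesis using less \<open>u \<in> V\<close> by blast
      qed
      then show "f v = card (upstream v)"
        using flow_balance[OF v] card_upstream[OF v] by simp
    qed
  qed
  with assms show ?thesis by blast
qed

lemma cost_as_path_sum: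
  "fqst_cost Z S nxt f = (\<Sum>z\<in>Z. \<Sum>v\<in>{v\<in>V. \<exists>j. (nxt ^^ j) z = v}. (dist v (nxt v))\<^sup>2)"
proof -
  have "fqst_cost Z S nxt f = (\<Sum>v\<in>V. \<Sum>z\<in>{z\<in>Z. \<exists>j. (nxt ^^ j) z = v}. (dist v (nxt v))\<^sup>2)"
    unfolding fqst_cost_def by (rule sum.cong) (simp_all add: flow_eq_card_upstream upstream_def)
  also have "\<dots> = (\<Sum>z\<in>Z. \<Sum>v\<in>{v\<in>V. \<exists>j. (nxt ^^ j) z = v}. (dist v (nxt v))\<^sup>2)"
    by (rule sum.swap_restrict) (use finite_V finite_sources in auto)
  finally show ?thesis .
qed

text \<open>Cauchy--Schwarz along one path, which has at most \<open>card V\<close> edges.\<close>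
lemma path_cost_lower_bound:
  assumes z: "z \<in> Z"
  shows "(dist z s)\<^sup>2 \<le> real (card V) * (\<Sum>v\<in>{v\<in>V. \<exists>j. (nxt ^^ j) z = v}. (dist v (nxt v))\<^sup>2)"
proof -
  have zV: "z \<in> V" using z by simp
  define P where "P = {v\<in>V. \<exists>j. (nxt ^^ j) z = v}"
  define b where "b j = dist ((nxt ^^ j) z) (nxt ((nxt ^^ j) z))" for j
  have P: "P = (\<lambda>j. (nxt ^^ j) z) ` {..<dep z}"
  proof (intro equalityI subsetI)
    fix v assume "v \<in> P"
    then obtain j where "(nxt ^^ j) z = v" "v \<in> V" unfolding P_def by blast
    then show "v \<in> (\<lambda>j. (nxt ^^ j) z) ` {..<dep z}" using iterate_in_V_iff[OF zV, of j] by blast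
  next
    fix v assume "v \<in> (\<lambda>j. (nxt ^^ j) z) ` {..<dep z}"
    then obtain j where "j < dep z" "v = (nxt ^^ j) z" by blast
    then show "v \<in> P" unfolding P_def using iterate_in_V_iff[OF zV, of j] by blast
  qed
  have inj: "inj_on (\<lambda>j. (nxt ^^ j) z) {..<dep z}"
  proof (rule inj_onI)
    fix i j assume "i \<in> {..<dep z}" "j \<in> {..<dep z}" "(nxt ^^ i) z = (nxt ^^ j) z"
    moreover have "dep ((nxt ^^ i) z) = dep z - i" "dep ((nxt ^^ j) z) = dep z - j"
      using depth_iterate_V[OF zV] by auto
    ultimately show "i = j" by auto
  qed
  have "dep z = card P" unfolding P using card_image[OF inj] by simp
  also have "\<dots> \<le> card V" unfolding P_def using finite_V by (intro card_mono) auto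
  finally have len: "dep z \<le> card V" .
  have "(nxt ^^ dep z) z = s" using iterate_at_root_iff[OF root_loop reaches_sink[OF zV]] by simp
  then have "dist z s \<le> (\<Sum>j<dep z. b j)" using dist_iterate_le[of z "dep z" nxt] by (simp add: b_def)
  then have "(dist z s)\<^sup>2 \<le> (\<Sum>j<dep z. b j)\<^sup>2" by (simp add: power_mono)
  also have "\<dots> \<le> (\<Sum>j<dep z. (b j)\<^sup>2) * card {..<dep z}" by (rule sum_squared_le_sum_of_squares)
  also have "\<dots> = (\<Sum>v\<in>P. (dist v (nxt v))\<^sup>2) * dep z"
    unfolding P sum.reindex[OF inj] by (simp add: b_def)
  also have "\<dots> \<le> (\<Sum>v\<in>P. (dist v (nxt v))\<^sup>2) * card V"
    using len by (intro mult_left_mono) (auto intro: sum_nonneg)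
  finally show ?thesis unfolding P_def by (simp add: mult.commute)
qed

lemma cost_lower_bound: "(\<Sum>z\<in>Z. (dist z s)\<^sup>2) \<le> real (card V) * fqst_cost Z S nxt f"
proof -
  have "(\<Sum>z\<in>Z. (dist z s)\<^sup>2)
      \<le> (\<Sum>z\<in>Z. real (card V) * (\<Sum>v\<in>{v\<in>V. \<exists>j. (nxt ^^ j) z = v}. (dist v (nxt v))\<^sup>2))"
    by (rule sum_mono) (rule path_cost_lower_bound)
  then show ?thesis by (simp add: cost_as_path_sum sum_distrib_left)
qed

end

subsection \<open>The lower bound\<close>

text \<open>The definition of an FQST leaves the parent of the sink unconstrained;
  it may be normalised to a loop without changing anything.\<close>
lemma fqst_sink_loop:
  assumes fq: "is_fqst Z s S nxt f" and sZ: "s \<notin> Z"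
  shows "is_fqst Z s S (nxt(s := s)) f" and "fqst_cost Z S (nxt(s := s)) f = fqst_cost Z S nxt f"
proof -
  have sV: "s \<notin> Z \<union> S" using fq sZ unfolding is_fqst_def by auto
  then have same: "u \<in> Z \<union> S \<Longrightarrow> (nxt(s := s)) u = nxt u" for u by auto
  have closed: "nxt u \<in> Z \<union> S \<union> {s}" if "u \<in> Z \<union> S" for u
    using fq that unfolding is_fqst_def by auto
  have step: "\<exists>j. (nxt(s := s) ^^ j) u = s"
    if "u \<in> Z \<union> S" "\<exists>j. (nxt(s := s) ^^ j) (nxt u) = s" for u
    using that same[of u] by (metis funpow_Suc_right o_apply)
  have reach: "\<exists>j. (nxt(s := s) ^^ j) u = s" if u: "u \<in> Z \<union> S" for u
  proof -
    obtain j where "(nxt ^^ j) u = s" using fq u unfolding is_fqst_def by blast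
    then show ?thesis using reach_transfer[where V = "Z \<union> S" and nxt = nxt and nxt' = "nxt(s := s)", OF closed step] u by blast
  qed
  have children: "{u \<in> Z \<union> S. (nxt(s := s)) u = x} = {u \<in> Z \<union> S. nxt u = x}" for x
    using same sV by auto
  show "is_fqst Z s S (nxt(s := s)) f"
    using fq reach unfolding is_fqst_def children by (auto simp: same)
  show "fqst_cost Z S (nxt(s := s)) f = fqst_cost Z S nxt f"
    unfolding fqst_cost_def by (rule sum.cong) (use same in auto)
qed

lemma fqst_cost_lower_bound:
  assumes "is_fqst Z s S nxt f" "finite Z" "s \<notin> Z"
  shows "(\<Sum>z\<in>Z. (dist z s)\<^sup>2) \<le> real (card (Z \<union> S)) * fqst_cost Z S nxt f"
proof -
  interpret rooted_fqst Z s S "nxt(s := s)" f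
    using assms fqst_sink_loop(1)[OF assms(1,3)] by unfold_locales simp_all
  show ?thesis using cost_lower_bound fqst_sink_loop(2)[OF assms(1,3)] by simp
qed

subsection \<open>Inserting beads\<close>

locale bead_insertion =
  fixes Z :: "pt set" and s :: pt and S :: "pt set" and nxt :: "pt \<Rightarrow> pt" and f :: "pt \<Rightarrow> real"
    and v :: pt and p :: pt
  assumes fqst: "is_fqst Z s S nxt f"
    and edge_tail: "v \<in> Z \<union> S"
    and fresh_bead: "p \<notin> Z \<union> S \<union> {s}"
    and finite_sources: "finite Z"
    and sink_not_source: "s \<notin> Z"
begin

abbreviation V :: "pt set" where "V \<equiv> Z \<union> S"

definition nxt_bead :: "pt \<Rightarrow> pt" where "nxt_bead = nxt(v := p, p := nxt v)"

definition f_bead :: "pt \<Rightarrow> real" where "f_bead = f(p := f v)"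

lemma finite_V: "finite V"
  using fqst finite_sources unfolding is_fqst_def by auto

lemma parent_closed: "u \<in> V \<Longrightarrow> nxt u \<in> V \<union> {s}"
  using fqst unfolding is_fqst_def by auto

lemma bead_notin: "p \<notin> V" "p \<noteq> s" "p \<noteq> v" "p \<noteq> nxt v"
  using fresh_bead edge_tail parent_closed[OF edge_tail] by auto

lemma new_edges: "nxt_bead v = p" "nxt_bead p = nxt v" "f_bead p = f v"
  using bead_notin unfolding nxt_bead_def f_bead_def by auto

lemma old_edges: "u \<in> V \<Longrightarrow> u \<noteq> v \<Longrightarrow> nxt_bead u = nxt u" "u \<in> V \<Longrightarrow> f_bead u = f u"
  using bead_notin unfolding nxt_bead_def f_bead_def by auto

text \<open>The in-flow of every node other than \<open>p\<close> is unchanged: at \<open>nxt v\<close> the edge from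
  \<open>v\<close> is replaced by the edge from \<open>p\<close>, which carries the same flow.\<close>
lemma inflow_unchanged:
  assumes "x \<noteq> p"
  shows "(\<Sum>u\<in>{u\<in>insert p V. nxt_bead u = x}. f_bead u) = (\<Sum>u\<in>{u\<in>V. nxt u = x}. f u)"
proof (cases "x = nxt v")
  case True
  have split: "{u\<in>insert p V. nxt_bead u = x} = insert p ({u\<in>V. nxt u = x} - {v})"
    using True assms bead_notin unfolding nxt_bead_def by auto
  have "v \<in> {u\<in>V. nxt u = x}" using True edge_tail by auto
  then have "(\<Sum>u\<in>{u\<in>V. nxt u = x}. f u) = f v + (\<Sum>u\<in>{u\<in>V. nxt u = x} - {v}. f u)"
    using finite_V by (simp add: sum.remove)
  moreover have "(\<Sum>u\<in>{u\<in>insert p V. nxt_bead u = x}. f_bead u)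
      = f_bead p + (\<Sum>u\<in>{u\<in>V. nxt u = x} - {v}. f_bead u)"
    unfolding split by (rule sum.insert) (use finite_V bead_notin in auto)
  moreover have "(\<Sum>u\<in>{u\<in>V. nxt u = x} - {v}. f_bead u) = (\<Sum>u\<in>{u\<in>V. nxt u = x} - {v}. f u)"
    by (rule sum.cong) (auto simp: old_edges)
  ultimately show ?thesis using new_edges by simp
next
  case False
  then have "{u\<in>insert p V. nxt_bead u = x} = {u\<in>V. nxt u = x}"
    using assms bead_notin unfolding nxt_bead_def by auto
  then show ?thesis by (auto simp: old_edges intro: sum.cong)
qed

lemma inflow_bead: "{u\<in>insert p V. nxt_bead u = p} = {v}"
  using parent_closed edge_tail bead_notin unfolding nxt_bead_def by auto

lemma reach_old:
  assumes "u \<in> V \<union> {s}" "(nxt ^^ j) u = s"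
  shows "\<exists>j. (nxt_bead ^^ j) u = s"
proof (rule reach_transfer[where V = V and nxt = nxt, OF _ _ assms])
  show "nxt u \<in> V \<union> {s}" if "u \<in> V" for u using parent_closed that .
  show "\<exists>j. (nxt_bead ^^ j) u = s" if u: "u \<in> V" and "\<exists>j. (nxt_bead ^^ j) (nxt u) = s" for u
  proof -
    from that obtain j where j: "(nxt_bead ^^ j) (nxt u) = s" by blast
    show ?thesis
    proof (cases "u = v")
      case True
      then have "(nxt_bead ^^ Suc (Suc j)) u = s"
        using j by (simp add: funpow_Suc_right new_edges del: funpow.simps)
      then show ?thesis by blast
    next
      case False
      then have "(nxt_bead ^^ Suc j) u = s"
        using j old_edges u by (simp add: funpow_Suc_right del: funpow.simps)
      then show ?thesis by blast
    qed
  qed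
qed

lemma reach_new:
  assumes "u \<in> insert p V"
  shows "\<exists>j. (nxt_bead ^^ j) u = s"
proof (cases "u = p")
  case False
  then show ?thesis using reach_old fqst assms unfolding is_fqst_def by blast
next
  case True
  obtain j where "(nxt ^^ j) v = s" using fqst edge_tail unfolding is_fqst_def by blast
  moreover have "v \<noteq> s" using fqst edge_tail sink_not_source unfolding is_fqst_def by blast
  ultimately obtain i where "(nxt ^^ i) (nxt v) = s" using reaches_from_parent by metis
  then obtain i' where "(nxt_bead ^^ i') (nxt v) = s" using reach_old parent_closed[OF edge_tail] by blast
  then have "(nxt_bead ^^ Suc i') p = s" by (simp add: funpow_Suc_right new_edges del: funpow.simps)
  with True show ?thesis by blast
qed

lemma bead_is_fqst: "is_fqst Z s (insert p S) nxt_bead f_bead"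
proof -
  from fqst have disj: "S \<inter> (Z \<union> {s}) = {}"
    and fpos: "\<forall>u \<in> V. f u > 0"
    and source: "\<forall>u \<in> Z. f u - (\<Sum>x \<in> {x \<in> V. nxt x = u}. f x) = 1"
    and steiner: "\<forall>u \<in> S. f u = (\<Sum>x \<in> {x \<in> V. nxt x = u}. f x)"
    and sink: "(\<Sum>x \<in> {x \<in> V. nxt x = s}. f x) = real (card Z)"
    unfolding is_fqst_def by auto
  have V': "Z \<union> insert p S = insert p V" by auto
  show ?thesis
    unfolding is_fqst_def V'
  proof (intro conjI ballI)
    show "finite (insert p S)" using finite_V by simp
    show "insert p S \<inter> (Z \<union> {s}) = {}" using disj fresh_bead by auto
  next
    fix u assume "u \<in> insert p V"
    then consider "u = v" | "u = p" | "u \<in> V" "u \<noteq> v" by blast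
    then show "nxt_bead u \<in> insert p V \<union> {s}"
    proof cases
      case 2
      then show ?thesis using parent_closed[OF edge_tail] new_edges by auto
    next
      case 3
      then show ?thesis using parent_closed[of u] old_edges by auto
    qed (simp add: new_edges)
  next
    fix u assume "u \<in> insert p V"
    then show "\<exists>j. (nxt_bead ^^ j) u = s" by (rule reach_new)
  next
    fix u assume "u \<in> insert p V"
    then show "f_bead u > 0" using fpos edge_tail by (auto simp: new_edges old_edges)
  next
    fix u assume u: "u \<in> Z"
    then have "u \<noteq> p" using bead_notin by auto
    then show "f_bead u - (\<Sum>x \<in> {x \<in> insert p V. nxt_bead x = u}. f_bead x) = 1"
      using source u inflow_unchanged old_edges(2)[of u] by auto
  next
    fix u assume u: "u \<in> insert p S"
    show "f_bead u = (\<Sum>x \<in> {x \<in> insert p V. nxt_bead x = u}. f_bead x)"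
    proof (cases "u = p")
      case True
      then show ?thesis using inflow_bead new_edges old_edges(2) edge_tail by simp
    next
      case False
      then show ?thesis using u steiner inflow_unchanged[OF False] old_edges(2)[of u] by auto
    qed
  next
    show "(\<Sum>x \<in> {x \<in> insert p V. nxt_bead x = s}. f_bead x) = real (card Z)"
      using inflow_unchanged[of s] bead_notin sink by simp
  qed
qed

lemma bead_cost:
  "fqst_cost Z (insert p S) nxt_bead f_bead =
     fqst_cost Z S nxt f - f v * (dist v (nxt v))\<^sup>2 + f v * (dist v p)\<^sup>2 + f v * (dist p (nxt v))\<^sup>2"
proof -
  define g where "g u = f u * (dist u (nxt u))\<^sup>2" for u
  define g' where "g' u = f_bead u * (dist u (nxt_bead u))\<^sup>2" for u
  have "fqst_cost Z (insert p S) nxt_bead f_bead = g' p + g' v + (\<Sum>u\<in>V - {v}. g' u)"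
    unfolding fqst_cost_def g'_def[symmetric] Un_insert_right
    using finite_V bead_notin edge_tail by (simp add: sum.remove)
  also have "(\<Sum>u\<in>V - {v}. g' u) = (\<Sum>u\<in>V - {v}. g u)"
    by (rule sum.cong) (auto simp: g_def g'_def old_edges)
  also have "\<dots> = fqst_cost Z S nxt f - g v"
    unfolding fqst_cost_def g_def[symmetric] using finite_V edge_tail by (simp add: sum.remove)
  finally show ?thesis
    using old_edges(2)[OF edge_tail] by (simp add: g_def g'_def new_edges)
qed

end

text \<open>Placing a bead at the fraction \<open>1/(a+1)\<close> of a segment and charging the remaining
  part with weight \<open>1/a\<close> reproduces the cost of \<open>a+1\<close> equal pieces.\<close>
lemma bead_split_cost:
  fixes v w :: "'a::real_normed_vector" and a :: real
  assumes "a > 0"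
  defines "q \<equiv> v + (1 / (a + 1)) *\<^sub>R (w - v)"
  shows "(dist v q)\<^sup>2 + (dist q w)\<^sup>2 / a = (dist v w)\<^sup>2 / (a + 1)"
proof -
  have a1: "a + 1 > 0" using assms(1) by simp
  have frac: "1 - 1 / (a + 1) = a / (a + 1)" using a1 by (simp add: field_simps)
  have "v - q = (- (1 / (a + 1))) *\<^sub>R (w - v)" "q - w = (1 - 1 / (a + 1)) *\<^sub>R (v - w)"
    by (simp_all add: q_def algebra_simps)
  then have dists: "dist v q = dist v w / (a + 1)" "dist q w = a * dist v w / (a + 1)"
    using assms(1) a1 unfolding frac by (simp_all add: dist_norm norm_minus_commute)
  have "(a * dist v w / (a + 1))\<^sup>2 / a = a * (dist v w / (a + 1))\<^sup>2"
    using assms(1) by (simp add: power2_eq_square)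
  moreover have "(a + 1) * (dist v w / (a + 1))\<^sup>2 = (dist v w)\<^sup>2 / (a + 1)"
    using a1 by (simp add: power2_eq_square)
  ultimately show ?thesis unfolding dists by (simp add: algebra_simps)
qed

lemma continuous_near_value_avoiding:
  fixes g :: "'a::{perfect_space, metric_space} \<Rightarrow> real"
  assumes "finite F" "isCont g q" "\<delta> > 0"
  shows "\<exists>p. p \<notin> F \<and> g p < g q + \<delta>"
proof -
  have "eventually (\<lambda>p. g p < g q + \<delta>) (at q)"
    using assms(2,3) by (intro order_tendstoD(2)) (auto simp: isCont_def)
  moreover have "eventually (\<lambda>p. p \<notin> F) (at q)"
    using assms(1) by (metis UNIV_I finite_imp_sparse open_UNIV sparse_in_eventually_iff)
  ultimately have "eventually (\<lambda>p. p \<notin> F \<and> g p < g q + \<delta>) (at q)"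
    by (simp add: eventually_conj)
  then show ?thesis by (rule eventually_happens'[rotated]) simp
qed

text \<open>The beads cannot simply be placed equally spaced, since such points may
  coincide with existing nodes; each is placed near its ideal position instead.\<close>
lemma subdivide_edge:
  assumes "is_fqst Z s S nxt f" "v \<in> Z \<union> S" "\<delta> > 0" "finite Z" "s \<notin> Z"
  shows "\<exists>S' nxt' f'. is_fqst Z s S' nxt' f' \<and> card S' = card S + m \<and>
     (\<forall>u\<in>Z-{v}. nxt' u = nxt u \<and> f' u = f u) \<and>
     fqst_cost Z S' nxt' f' \<le> fqst_cost Z S nxt f - f v * (dist v (nxt v))\<^sup>2
        + f v * (dist v (nxt v))\<^sup>2 / real (m + 1) + \<delta>"
  using assms
proof (induction m arbitrary: S nxt f v \<delta>)
  case 0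
  then show ?case by (intro exI[of _ S] exI[of _ nxt] exI[of _ f]) simp
next
  case (Suc m)
  note fq = Suc.prems(1) and v = Suc.prems(2) and \<delta> = Suc.prems(3)
  define w where "w = nxt v"
  define L where "L = dist v w"
  define g where "g p = (dist v p)\<^sup>2 + (dist p w)\<^sup>2 / real (m + 1)" for p
  define q where "q = v + (1 / (real (m + 1) + 1)) *\<^sub>R (w - v)"
  have fv: "f v > 0" and finS: "finite S" using fq v unfolding is_fqst_def by auto
  have gq: "g q = L\<^sup>2 / real (m + 2)"
    using bead_split_cost[of "real (m + 1)" v w] unfolding g_def q_def L_def by simp
  have "isCont g q" unfolding g_def by (intro continuous_intros) auto
  moreover have "finite (Z \<union> S \<union> {s})" using Suc.prems(4) finS by simp
  ultimately obtain p where p: "p \<notin> Z \<union> S \<union> {s}" and gp: "g p < g q + \<delta> / (2 * f v)"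
    using continuous_near_value_avoiding[where F = "Z \<union> S \<union> {s}" and \<delta> = "\<delta> / (2 * f v)"] \<delta> fv by auto
  interpret bead: bead_insertion Z s S nxt f v p
    using fq v p Suc.prems(4,5) by unfold_locales
  note cost1 = bead.bead_cost[folded w_def, folded L_def]
  have "p \<in> Z \<union> insert p S" "\<delta> / 2 > 0" using \<delta> by simp_all
  from Suc.IH[OF bead.bead_is_fqst this Suc.prems(4,5)] obtain S' nxt' f' where
    fq': "is_fqst Z s S' nxt' f'" and card': "card S' = card (insert p S) + m"
    and keep': "\<forall>u\<in>Z-{p}. nxt' u = bead.nxt_bead u \<and> f' u = bead.f_bead u"
    and cost': "fqst_cost Z S' nxt' f' \<le> fqst_cost Z (insert p S) bead.nxt_bead bead.f_bead
        - bead.f_bead p * (dist p (bead.nxt_bead p))\<^sup>2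
        + bead.f_bead p * (dist p (bead.nxt_bead p))\<^sup>2 / real (m + 1) + \<delta> / 2"
    by blast
  have "card S' = card S + Suc m" using card' finS p by simp
  moreover have "\<forall>u\<in>Z-{v}. nxt' u = nxt u \<and> f' u = f u"
    using keep' p unfolding bead.nxt_bead_def bead.f_bead_def by auto
  moreover have "fqst_cost Z S' nxt' f' \<le> fqst_cost Z S nxt f - f v * L\<^sup>2 + f v * L\<^sup>2 / real (Suc m + 1) + \<delta>"
  proof -
    have "f v * g p < f v * g q + \<delta> / 2" using gp fv by (simp add: field_simps)
    moreover have "f v * g p = f v * (dist v p)\<^sup>2 + f v * (dist p w)\<^sup>2 / real (m + 1)"
      unfolding g_def by (simp add: algebra_simps)
    moreover have "f v * g q = f v * L\<^sup>2 / real (Suc m + 1)" using gq by simp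
    ultimately show ?thesis using cost' cost1 unfolding bead.new_edges w_def by linarith
  qed
  ultimately show ?case using fq' unfolding L_def w_def by blast
qed

subsection \<open>The upper bound and the main theorem\<close>

definition beaded_edge_cost :: "real \<Rightarrow> real \<Rightarrow> real \<Rightarrow> real" where
  "beaded_edge_cost c fl len = (let m = num_beads c fl len in
     real (m + 1) * (fl * (len / real (m + 1))\<^sup>2) + c * real m)"

lemma bst_costc_as_sum:
  "bst_costc c Z nxt f = (\<Sum>v\<in>Z. beaded_edge_cost c (f v) (dist v (nxt v)))"
  unfolding bst_costc_def beaded_edge_cost_def ..

lemma beaded_edge_cost_eq:
  "beaded_edge_cost c fl len
     = fl * len\<^sup>2 / real (num_beads c fl len + 1) + c * real (num_beads c fl len)"
  unfolding beaded_edge_cost_def Let_def by (simp add: power2_eq_square)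

lemma bead_edges:
  assumes tree: "is_fqst Z s {} nxtM fM" and finZ: "finite Z" and sZ: "s \<notin> Z" and \<delta>: "\<delta> > 0"
  shows "finite W \<Longrightarrow> W \<subseteq> Z \<Longrightarrow> \<exists>S' nxt' f'. is_fqst Z s S' nxt' f' \<and>
     (\<forall>u\<in>Z-W. nxt' u = nxtM u \<and> f' u = fM u) \<and>
     fqst_costc c Z S' nxt' f' \<le> (\<Sum>u\<in>Z-W. fM u * (dist u (nxtM u))\<^sup>2)
        + (\<Sum>u\<in>W. beaded_edge_cost c (fM u) (dist u (nxtM u))) + real (card W) * \<delta>"
proof (induction W rule: finite_induct)
  case empty
  show ?case
    by (rule exI[of _ "{}"], rule exI[of _ nxtM], rule exI[of _ fM])
       (simp add: tree fqst_costc_def fqst_cost_def)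
next
  case (insert x W)
  then obtain S1 nxt1 f1 where fq1: "is_fqst Z s S1 nxt1 f1"
    and keep1: "\<forall>u\<in>Z-W. nxt1 u = nxtM u \<and> f1 u = fM u"
    and cost1: "fqst_costc c Z S1 nxt1 f1 \<le> (\<Sum>u\<in>Z-W. fM u * (dist u (nxtM u))\<^sup>2)
        + (\<Sum>u\<in>W. beaded_edge_cost c (fM u) (dist u (nxtM u))) + real (card W) * \<delta>"
    by auto
  have x: "x \<in> Z - W" using insert by auto
  define m where "m = num_beads c (fM x) (dist x (nxtM x))"
  define L where "L = dist x (nxtM x)"
  have edge: "nxt1 x = nxtM x" "f1 x = fM x" using keep1 x by auto
  have "x \<in> Z \<union> S1" using x by simp
  from subdivide_edge[OF fq1 this \<delta> finZ sZ, of m] obtain S' nxt' f'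
    where fq': "is_fqst Z s S' nxt' f'" and card': "card S' = card S1 + m"
    and keep': "\<forall>u\<in>Z-{x}. nxt' u = nxt1 u \<and> f' u = f1 u"
    and cost': "fqst_cost Z S' nxt' f' \<le> fqst_cost Z S1 nxt1 f1 - f1 x * (dist x (nxt1 x))\<^sup>2
        + f1 x * (dist x (nxt1 x))\<^sup>2 / real (m + 1) + \<delta>"
    by blast
  have "(\<Sum>u\<in>Z-W. fM u * (dist u (nxtM u))\<^sup>2)
      = fM x * L\<^sup>2 + (\<Sum>u\<in>Z - insert x W. fM u * (dist u (nxtM u))\<^sup>2)"
  proof -
    have "Z - W - {x} = Z - insert x W" by auto
    then show ?thesis
      using sum.remove[OF _ x, of "\<lambda>u. fM u * (dist u (nxtM u))\<^sup>2"] finZ unfolding L_def by simp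
  qed
  moreover have "(\<Sum>u\<in>insert x W. beaded_edge_cost c (fM u) (dist u (nxtM u)))
      = fM x * L\<^sup>2 / real (m + 1) + c * real m + (\<Sum>u\<in>W. beaded_edge_cost c (fM u) (dist u (nxtM u)))"
    using insert(1,2) by (simp add: beaded_edge_cost_eq m_def L_def)
  moreover have "fqst_costc c Z S' nxt' f' = fqst_cost Z S' nxt' f' + c * real (card S1) + c * real m"
    by (simp add: fqst_costc_def card' algebra_simps)
  moreover have "fqst_costc c Z S1 nxt1 f1 = fqst_cost Z S1 nxt1 f1 + c * real (card S1)"
    by (simp add: fqst_costc_def)
  moreover have "real (card (insert x W)) * \<delta> = real (card W) * \<delta> + \<delta>"
    using insert(1,2) by (simp add: algebra_simps)
  ultimately have "fqst_costc c Z S' nxt' f' \<le> (\<Sum>u\<in>Z - insert x W. fM u * (dist u (nxtM u))\<^sup>2)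
      + (\<Sum>u\<in>insert x W. beaded_edge_cost c (fM u) (dist u (nxtM u))) + real (card (insert x W)) * \<delta>"
    using cost' cost1 unfolding edge L_def by linarith
  moreover have "\<forall>u\<in>Z - insert x W. nxt' u = nxtM u \<and> f' u = fM u" using keep' keep1 by auto
  ultimately show ?case using fq' by blast
qed

text \<open>Upper bound: a minimum FQST costs no more than the beaded spanning tree.  (The
  beaded tree itself need not be an FQST, as beads may collide with other nodes, but
  FQSTs of cost arbitrarily close to it exist.)\<close>
lemma mfqst_costc_le_bst:
  assumes min: "is_mfqst c Z s S nxt f" and tree: "is_fqst Z s {} nxtM fM"
    and finZ: "finite Z" and sZ: "s \<notin> Z"
  shows "fqst_costc c Z S nxt f \<le> bst_costc c Z nxtM fM"
proof (rule field_le_epsilon)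
  fix \<epsilon> :: real assume "\<epsilon> > 0"
  define \<delta> where "\<delta> = \<epsilon> / (real (card Z) + 1)"
  have "\<delta> > 0" using \<open>\<epsilon> > 0\<close> by (simp add: \<delta>_def)
  then obtain S' nxt' f' where fq': "is_fqst Z s S' nxt' f'"
    and cost': "fqst_costc c Z S' nxt' f' \<le> bst_costc c Z nxtM fM + real (card Z) * \<delta>"
    using bead_edges[OF tree finZ sZ, of \<delta> Z c] finZ by (auto simp: bst_costc_as_sum)
  have "real (card Z) * \<delta> \<le> \<epsilon>"
    using \<open>\<epsilon> > 0\<close> by (simp add: \<delta>_def field_simps)
  moreover have "fqst_costc c Z S nxt f \<le> fqst_costc c Z S' nxt' f'"
    using min fq' unfolding is_mfqst_def by blast
  ultimately show "fqst_costc c Z S nxt f \<le> bst_costc c Z nxtM fM + \<epsilon>" using cost' by linarith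
qed

theorem mainTheorem17:
  fixes Z :: "pt set" and zBS :: pt and c :: real and S :: "pt set"
    and nxt :: "pt \<Rightarrow> pt" and f :: "pt \<Rightarrow> real" and k :: nat
    and nxtM :: "pt \<Rightarrow> pt" and fM :: "pt \<Rightarrow> real"
  assumes "finite Z" and "Z \<noteq> {}" and "zBS \<notin> Z" and "c > 0"
    and "is_mfqst c Z zBS S nxt f" and "card S = k"
    and "is_emst Z zBS nxtM" and "is_fqst Z zBS {} nxtM fM"
  shows "real k \<le> (1 / c) * (bst_costc c Z nxtM fM
            - (1 / real (card Z + k + 1)) * (\<Sum>z \<in> Z. (dist z zBS)\<^sup>2))"
proof -
  define N where "N = card Z + k"
  define D where "D = (\<Sum>z \<in> Z. (dist z zBS)\<^sup>2)"
  have fq: "is_fqst Z zBS S nxt f" using assms(5) unfolding is_mfqst_def by blast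
  then have "card (Z \<union> S) = N"
    using assms(1,6) unfolding N_def is_fqst_def by (subst card_Un_disjoint) auto
  then have lower: "D \<le> real N * fqst_cost Z S nxt f"
    using fqst_cost_lower_bound[OF fq assms(1,3)] unfolding D_def by simp
  have upper: "fqst_cost Z S nxt f + c * real k \<le> bst_costc c Z nxtM fM"
    using mfqst_costc_le_bst[OF assms(5,8,1,3)] assms(6) unfolding fqst_costc_def by simp
  have "N > 0" using assms(1,2) unfolding N_def by (simp add: card_gt_0_iff)
  moreover have "D \<ge> 0" unfolding D_def by (simp add: sum_nonneg)
  ultimately have "D / real (N + 1) \<le> D / real N" by (simp add: frac_le)
  also have "\<dots> \<le> fqst_cost Z S nxt f" using lower \<open>N > 0\<close> by (simp add: divide_le_eq mult.commute)
  finally have "c * real k \<le> bst_costc c Z nxtM fM - D / real (N + 1)" using upper by linarith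
  then have "real k \<le> (bst_costc c Z nxtM fM - D / real (N + 1)) / c"
    using assms(4) by (simp add: pos_le_divide_eq mult.commute)
  then show ?thesis unfolding D_def N_def by simp
qed

end
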